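(* Let $\mathscr{H}$ be a complex Hilbert space, $N(\cdot)$ a norm on $\mathbb{B}(\mathscr{H})$, and $B,C\in\mathbb{B}(\mathscr{H})$ self-adjoint. Then $$\frac{1}{\sqrt2}\max\{N(B+C),N(B-C)\}\leq w_{(N,e)}(B,C)\leq\frac{1}{\sqrt2}\sqrt{N^2(B+C)+N^2(B-C)}.$$
   Context: For $T\in\mathbb{B}(\mathscr{H})$, $\Re(T)=\frac12(T+T^* )$. For $B,C\in\mathbb{B}(\mathscr{H})$, $w_{(N,e)}(B,C)=\sup_{\lambda_1,\lambda_2\in\mathbb{C},\ |\lambda_1|^2+|\lambda_2|^2\leq 1}\sup_{\theta\in\mathbb{R}} N(\Re(e^{i\theta}(\lambda_1B+\lambda_2C)))$. *)

theory Defs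
  imports "HOL-Analysis.Analysis"
begin

class chilbert = banach +
  fixes scaleC :: "complex \<Rightarrow> 'a \<Rightarrow> 'a"
    and cinner :: "'a \<Rightarrow> 'a \<Rightarrow> complex"
  assumes scaleC_add_right: "scaleC a (x + y) = scaleC a x + scaleC a y"
    and scaleC_add_left: "scaleC (a + b) x = scaleC a x + scaleC b x"
    and scaleC_scaleC: "scaleC a (scaleC b x) = scaleC (a * b) x"
    and scaleC_one: "scaleC 1 x = x"
    and scaleR_scaleC: "scaleR r x = scaleC (complex_of_real r) x"
    and cinner_commute: "cinner y x = cnj (cinner x y)"
    and cinner_add_left: "cinner (x + y) z = cinner x z + cinner y z"
    and cinner_scaleC_left: "cinner (scaleC a x) y = a * cinner x y"
    and cinner_self_norm: "cinner x x = complex_of_real ((norm x)\<^sup>2)"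

definition bounded_clinear :: "('a::chilbert \<Rightarrow> 'a) \<Rightarrow> bool" where
  "bounded_clinear T \<longleftrightarrow>
     (\<forall>x y. T (x + y) = T x + T y) \<and>
     (\<forall>c x. T (scaleC c x) = scaleC c (T x)) \<and>
     (\<exists>K. \<forall>x. norm (T x) \<le> norm x * K)"

definition adjoint :: "('a::chilbert \<Rightarrow> 'a) \<Rightarrow> ('a \<Rightarrow> 'a)" where
  "adjoint T = (THE S. bounded_clinear S \<and> (\<forall>x y. cinner (T x) y = cinner x (S y)))"

definition selfadjoint :: "('a::chilbert \<Rightarrow> 'a) \<Rightarrow> bool" where
  "selfadjoint T \<longleftrightarrow> bounded_clinear T \<and> adjoint T = T"

definition ReOp :: "('a::chilbert \<Rightarrow> 'a) \<Rightarrow> ('a \<Rightarrow> 'a)" where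
  "ReOp T = (\<lambda>x. scaleC (1/2) (T x + adjoint T x))"

definition is_op_norm :: "(('a::chilbert \<Rightarrow> 'a) \<Rightarrow> real) \<Rightarrow> bool" where
  "is_op_norm N \<longleftrightarrow>
     (\<forall>T. bounded_clinear T \<longrightarrow> N T \<ge> 0) \<and>
     (\<forall>T. bounded_clinear T \<longrightarrow> (N T = 0 \<longleftrightarrow> T = (\<lambda>_. 0))) \<and>
     (\<forall>c T. bounded_clinear T \<longrightarrow> N (\<lambda>x. scaleC c (T x)) = cmod c * N T) \<and>
     (\<forall>S T. bounded_clinear S \<longrightarrow> bounded_clinear T \<longrightarrow> N (\<lambda>x. S x + T x) \<le> N S + N T)"

definition w_Ne :: "(('a::chilbert \<Rightarrow> 'a) \<Rightarrow> real) \<Rightarrow> ('a \<Rightarrow> 'a) \<Rightarrow> ('a \<Rightarrow> 'a) \<Rightarrow> real" where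
  "w_Ne N B C =
     (SUP p \<in> {(l1, l2, \<theta>). (cmod l1)\<^sup>2 + (cmod l2)\<^sup>2 \<le> 1 \<and> \<theta> \<in> (UNIV :: real set)}.
        (case p of (l1, l2, \<theta>) \<Rightarrow>
          N (ReOp (\<lambda>x. scaleC (exp (\<i> * complex_of_real \<theta>)) (scaleC l1 (B x) + scaleC l2 (C x))))))"

end

theory Submission
  imports Defs
begin

text \<open>For self-adjoint \<open>B, C\<close> the real part of \<open>e\<^sup>i\<^sup>\<theta>(\<lambda>\<^sub>1 B + \<lambda>\<^sub>2 C)\<close> is \<open>p B + q C\<close> with
\<open>p = Re(e\<^sup>i\<^sup>\<theta>\<lambda>\<^sub>1)\<close>, \<open>q = Re(e\<^sup>i\<^sup>\<theta>\<lambda>\<^sub>2)\<close>, and these real pairs fill exactly the unit disc. Writing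
\<open>p B + q C = a (B + C) + b (B - C)\<close>, so that \<open>a\<^sup>2 + b\<^sup>2 = (p\<^sup>2 + q\<^sup>2)/2\<close>, the quantity
\<open>w\<^sub>(\<^sub>N\<^sub>,\<^sub>e\<^sub>)(B, C)\<close> is the supremum of \<open>N(a (B + C) + b (B - C))\<close> over \<open>a\<^sup>2 + b\<^sup>2 \<le> 1/2\<close>.
The triangle inequality and Cauchy-Schwarz in \<open>\<real>\<^sup>2\<close> bound it above, and the points
\<open>(1/\<surd>2, 0)\<close>, \<open>(0, 1/\<surd>2)\<close> bound it below.

Computing the adjoint needs that bounded operators have adjoints, i.e. the Riesz
representation theorem. A bounded functional attains its norm on the unit ball, because by
the parallelogram law a maximising sequence is Cauchy; a norming vector is orthogonal to the
kernel, which gives the representing vector.\<close>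

interpretation cscale: module "scaleC :: complex \<Rightarrow> 'a::chilbert \<Rightarrow> 'a"
  by unfold_locales (simp_all add: scaleC_add_right scaleC_add_left scaleC_scaleC scaleC_one)

lemma cinner_add_right: "cinner x (y + z) = cinner x y + cinner x z"
  by (metis cinner_commute cinner_add_left complex_cnj_add)

lemma cinner_scaleC_right: "cinner x (scaleC a y) = cnj a * cinner x y"
  by (metis cinner_commute cinner_scaleC_left complex_cnj_mult)

lemma cinner_diff_left: "cinner (x - z) y = cinner x y - cinner (z::'a::chilbert) y"
  using cinner_add_left[of "x - z" z y] by simp

lemma cinner_diff_right: "cinner x (y - z) = cinner x y - cinner (x::'a::chilbert) z"
  using cinner_add_right[of x "y - z" z] by simp

lemma cinner_zero_right [simp]: "cinner x 0 = 0"
  using cinner_diff_right[of x 0 0] by simp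

lemma norm_scaleC: "norm (scaleC c (x::'a::chilbert)) = cmod c * norm x"
proof -
  have "complex_of_real ((norm (scaleC c x))\<^sup>2) = cinner (scaleC c x) (scaleC c x)"
    by (simp add: cinner_self_norm)
  also have "\<dots> = c * cnj c * cinner x x"
    by (simp add: cinner_scaleC_left cinner_scaleC_right mult.assoc)
  also have "\<dots> = complex_of_real ((cmod c * norm x)\<^sup>2)"
    by (simp add: cinner_self_norm complex_norm_square[symmetric] power_mult_distrib)
  finally have "(norm (scaleC c x))\<^sup>2 = (cmod c * norm x)\<^sup>2"
    using of_real_eq_iff by blast
  then show ?thesis
    by (simp add: power2_eq_iff_nonneg)
qed

lemma cinner_eqI: "(\<And>x. cinner x a = cinner x b) \<Longrightarrow> a = (b::'a::chilbert)"
  using cinner_self_norm[of "a - b"] by (simp add: cinner_diff_right)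

lemma cmod_cinner_le: "cmod (cinner x y) \<le> norm x * norm (y::'a::chilbert)"
proof (cases "y = 0")
  case True
  then show ?thesis by simp
next
  case False
  define a where "a = cinner x y"
  define n where "n = (norm y)\<^sup>2"
  have n: "n > 0" using False by (simp add: n_def)
  have "cinner (scaleC n x - scaleC a y) (scaleC n x - scaleC a y)
      = of_real n * of_real n * cinner x x - of_real n * cnj a * cinner x y
        - a * of_real n * cinner y x + a * cnj a * cinner y y"
    by (simp add: cinner_diff_left cinner_diff_right cinner_scaleC_left cinner_scaleC_right algebra_simps)
  also have "\<dots> = of_real (n * (n * (norm x)\<^sup>2 - (cmod a)\<^sup>2))"
    by (simp add: cinner_self_norm cinner_commute[of y x] complex_norm_square[symmetric]
        a_def[symmetric] n_def algebra_simps)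
  finally have "0 \<le> n * (n * (norm x)\<^sup>2 - (cmod a)\<^sup>2)"
    by (metis cinner_self_norm of_real_eq_iff zero_le_power2)
  then have "(cmod a)\<^sup>2 \<le> (norm x * norm y)\<^sup>2"
    using n by (simp add: zero_le_mult_iff n_def power_mult_distrib mult.commute)
  then show ?thesis
    unfolding a_def by (simp add: power2_le_iff_abs_le)
qed

lemma chilbert_parallelogram:
  "(norm (x + y))\<^sup>2 + (norm (x - y))\<^sup>2 = 2 * (norm x)\<^sup>2 + 2 * (norm (y::'a::chilbert))\<^sup>2"
proof -
  have "complex_of_real ((norm (x + y))\<^sup>2 + (norm (x - y))\<^sup>2)
      = cinner (x + y) (x + y) + cinner (x - y) (x - y)"
    by (simp add: cinner_self_norm)
  also have "\<dots> = 2 * cinner x x + 2 * cinner y y"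
    by (simp add: cinner_diff_left cinner_diff_right cinner_add_left cinner_add_right)
  also have "\<dots> = complex_of_real (2 * (norm x)\<^sup>2 + 2 * (norm y)\<^sup>2)"
    by (simp add: cinner_self_norm)
  finally show ?thesis
    using of_real_eq_iff by blast
qed

lemma cinner_zero_if_norm_le_norm_add:
  fixes x y :: "'a::chilbert"
  assumes min: "\<And>t. norm x \<le> norm (x + scaleC t y)"
  shows "cinner y x = 0"
proof -
  define a where "a = cinner y x"
  define s where "s = 1 / ((norm y)\<^sup>2 + 1)"
  have s: "s > 0" "s * (norm y)\<^sup>2 < 1"
    by (auto simp: s_def add_nonneg_pos divide_less_eq)
  define v where "v = x - scaleC (of_real s * cnj a) y"
  have "complex_of_real ((norm v)\<^sup>2) = cinner v v"
    by (simp add: cinner_self_norm)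
  also have "\<dots> = cinner x x - of_real s * (a * cnj a) * (2 - of_real s * cinner y y)"
    by (simp add: v_def cinner_diff_left cinner_diff_right cinner_scaleC_left cinner_scaleC_right
        cinner_commute[of x y] a_def[symmetric] algebra_simps)
  also have "\<dots> = complex_of_real ((norm x)\<^sup>2 - s * (cmod a)\<^sup>2 * (2 - s * (norm y)\<^sup>2))"
    by (simp add: cinner_self_norm complex_norm_square[unfolded of_real_power])
  finally have "(norm v)\<^sup>2 = (norm x)\<^sup>2 - s * (cmod a)\<^sup>2 * (2 - s * (norm y)\<^sup>2)"
    using of_real_eq_iff by blast
  moreover have "(norm x)\<^sup>2 \<le> (norm v)\<^sup>2"
    using min[of "- (of_real s * cnj a)"] by (simp add: v_def power_mono)
  ultimately have "s * (cmod a)\<^sup>2 * (2 - s * (norm y)\<^sup>2) \<le> 0"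
    by linarith
  with s show ?thesis
    by (simp add: a_def mult_le_0_iff)
qed

lemma norm_diff_squared_le_if_norm_add_ge:
  fixes x y :: "'a::chilbert"
  assumes "norm x \<le> 1" "norm y \<le> 1" "2 - e \<le> norm (x + y)"
  shows "(norm (x - y))\<^sup>2 \<le> 4 * e"
proof -
  have xy: "(norm (x - y))\<^sup>2 \<le> 4 - (norm (x + y))\<^sup>2"
    using chilbert_parallelogram[of x y] power_le_one[OF _ assms(1), of 2]
      power_le_one[OF _ assms(2), of 2]
    by simp
  show ?thesis
  proof (cases "e \<le> 2")
    case True
    then have "(2 - e)\<^sup>2 \<le> (norm (x + y))\<^sup>2"
      using assms(3) by (intro power_mono) auto
    moreover have "(2 - e)\<^sup>2 = 4 - 4 * e + e\<^sup>2"
      by (simp add: power2_diff)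
    ultimately show ?thesis
      using xy zero_le_power2[of e] by linarith
  next
    case False
    with xy show ?thesis
      using zero_le_power2[of "norm (x + y)"] by linarith
  qed
qed

lemma cmod_le_if_Re_le:
  assumes sc: "\<And>c x. f (scaleC c x) = c * f x"
    and Re_le: "\<And>w. Re (f w) \<le> M * norm w"
  shows "cmod (f w) \<le> M * norm (w::'a::chilbert)"
proof (cases "f w = 0")
  case True
  then show ?thesis using Re_le[of w] by simp
next
  case False
  \<comment> \<open>rotate \<open>w\<close> so that \<open>f\<close> takes the real value \<open>cmod (f w)\<close> on it\<close>
  define c where "c = cnj (f w) / cmod (f w)"
  have "cmod c = 1" using False by (simp add: c_def norm_divide)
  have "f (scaleC c w) = cmod (f w)"
    using False by (simp add: sc c_def complex_norm_square[symmetric] power2_eq_square mult.commute)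
  then show ?thesis
    using Re_le[of "scaleC c w"] \<open>cmod c = 1\<close> by (simp add: norm_scaleC)
qed

lemma maximizing_sequence_Cauchy:
  fixes f :: "'a::chilbert \<Rightarrow> complex"
  assumes add: "\<And>x y. f (x + y) = f x + f y"
    and Re_le: "\<And>w. Re (f w) \<le> M * norm w" and "M > 0"
    and X: "\<And>n. norm (X n) \<le> 1" and lim: "(\<lambda>n. Re (f (X n))) \<longlonglongrightarrow> M"
  shows "Cauchy X"
proof (rule metric_CauchyI)
  fix \<epsilon> :: real
  assume "\<epsilon> > 0"
  define \<delta> where "\<delta> = M * \<epsilon>\<^sup>2 / 16"
  have "\<delta> > 0" using \<open>M > 0\<close> \<open>\<epsilon> > 0\<close> by (simp add: \<delta>_def)
  then obtain K where K: "\<And>n. n \<ge> K \<Longrightarrow> M - \<delta> < Re (f (X n))"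
    using lim \<open>\<delta> > 0\<close> unfolding LIMSEQ_iff real_norm_def abs_less_iff by fastforce
  have "dist (X m) (X n) < \<epsilon>" if "m \<ge> K" "n \<ge> K" for m n
  proof -
    have "2 * M - 2 * \<delta> < Re (f (X m + X n))"
      using K[OF \<open>m \<ge> K\<close>] K[OF \<open>n \<ge> K\<close>] by (simp add: add)
    also have "\<dots> \<le> M * norm (X m + X n)" by (rule Re_le)
    finally have "2 - 2 * \<delta> / M \<le> norm (X m + X n)"
      using \<open>M > 0\<close> by (simp add: field_simps)
    then have "(norm (X m - X n))\<^sup>2 \<le> 4 * (2 * \<delta> / M)"
      by (rule norm_diff_squared_le_if_norm_add_ge[OF X X])
    also have "\<dots> < \<epsilon>\<^sup>2"
      using \<open>M > 0\<close> \<open>\<epsilon> > 0\<close> by (simp add: \<delta>_def)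
    finally show ?thesis
      using \<open>\<epsilon> > 0\<close> by (simp add: dist_norm power_less_imp_less_base)
  qed
  then show "\<exists>K. \<forall>m\<ge>K. \<forall>n\<ge>K. dist (X m) (X n) < \<epsilon>" by blast
qed

lemma Re_functional_attains_Sup:
  fixes f :: "'a::chilbert \<Rightarrow> complex"
  assumes f: "bounded_linear f" and bdd: "bdd_above ((\<lambda>x. Re (f x)) ` {x. norm x \<le> 1})"
    and M: "M = (SUP x\<in>{x. norm x \<le> 1}. Re (f x))" and "M > 0"
    and Re_le: "\<And>w. Re (f w) \<le> M * norm w"
  shows "\<exists>x0. norm x0 = 1 \<and> Re (f x0) = M"
proof -
  have "(\<lambda>x. Re (f x)) ` {x. norm x \<le> 1} \<noteq> {}"
  proof -
    have "(0::'a) \<in> {x. norm x \<le> 1}" by simp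
    then show ?thesis by blast
  qed
  then have "M \<in> closure ((\<lambda>x. Re (f x)) ` {x. norm x \<le> 1})"
    unfolding M using bdd by (rule closure_contains_Sup)
  then obtain r where r: "\<forall>n. r n \<in> (\<lambda>x. Re (f x)) ` {x. norm x \<le> 1}" "r \<longlonglongrightarrow> M"
    unfolding closure_sequential by blast
  then obtain X where X1: "\<And>n. norm (X n) \<le> 1" and rX: "\<And>n. r n = Re (f (X n))"
    unfolding image_iff Bex_def mem_Collect_eq by metis
  have lim: "(\<lambda>n. Re (f (X n))) \<longlonglongrightarrow> M"
    using r(2) by (simp add: rX[symmetric])
  have "Cauchy X"
    by (rule maximizing_sequence_Cauchy[OF linear_add[OF bounded_linear.linear[OF f]]
          Re_le \<open>M > 0\<close> X1 lim])
  then obtain x0 where x0: "X \<longlonglongrightarrow> x0"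
    using Cauchy_convergent_iff convergent_def by blast
  have "(\<lambda>n. f (X n)) \<longlonglongrightarrow> f x0"
    using f x0 by (rule bounded_linear.tendsto)
  then have "(\<lambda>n. Re (f (X n))) \<longlonglongrightarrow> Re (f x0)"
    by (rule tendsto_Re)
  then have Re_x0: "Re (f x0) = M"
    using lim by (rule LIMSEQ_unique)
  have "norm x0 \<le> 1"
    by (rule LIMSEQ_le_const2[OF tendsto_norm[OF x0]]) (use X1 in blast)
  moreover have "M \<le> M * norm x0"
    using Re_le[of x0] Re_x0 by simp
  ultimately have "norm x0 = 1"
    using \<open>M > 0\<close> by (simp add: mult_le_cancel_left1)
  with Re_x0 show ?thesis by blast
qed

lemma bounded_functional_attains_norm:
  fixes f :: "'a::chilbert \<Rightarrow> complex"
  assumes add: "\<And>x y. f (x + y) = f x + f y" and sc: "\<And>c x. f (scaleC c x) = c * f x"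
    and bnd: "\<And>x. cmod (f x) \<le> norm x * K" and "f y \<noteq> 0"
  shows "\<exists>x0 M. M > 0 \<and> norm x0 = 1 \<and> f x0 = of_real M \<and> (\<forall>w. cmod (f w) \<le> M * norm w)"
proof -
  define M where "M = (SUP x\<in>{x. norm x \<le> 1}. Re (f x))"
  have bdd: "bdd_above ((\<lambda>x. Re (f x)) ` {x. norm x \<le> 1})"
  proof (rule bdd_aboveI2)
    fix x :: 'a assume "x \<in> {x. norm x \<le> 1}"
    have "Re (f x) \<le> norm x * K" using complex_Re_le_cmod bnd order_trans by blast
    also have "\<dots> \<le> norm x * \<bar>K\<bar>" by (simp add: mult_left_mono)
    also have "\<dots> \<le> \<bar>K\<bar>" using \<open>x \<in> {x. norm x \<le> 1}\<close> by (simp add: mult_left_le_one_le)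
    finally show "Re (f x) \<le> \<bar>K\<bar>" .
  qed
  have Re_le: "Re (f w) \<le> M * norm w" for w
  proof (cases "w = 0")
    case True
    then show ?thesis using add[of 0 0] by simp
  next
    case False
    then have "Re (f (scaleC (1 / norm w) w)) \<le> M"
      unfolding M_def by (intro cSUP_upper[OF _ bdd]) (simp add: norm_scaleC norm_divide)
    with False show ?thesis
      by (simp add: sc divide_le_eq mult.commute)
  qed
  have cmod_le: "cmod (f w) \<le> M * norm w" for w
    using cmod_le_if_Re_le[OF sc Re_le] .
  have "0 < M * norm y"
    using \<open>f y \<noteq> 0\<close> cmod_le[of y] zero_less_norm_iff[of "f y"] by linarith
  then have "M > 0"
    by (simp add: zero_less_mult_iff)
  have "bounded_linear f"
    by (rule bounded_linear_intro[where K=K])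
      (simp_all only: add bnd scaleR_scaleC sc scaleR_conv_of_real)
  then obtain x0 where "norm x0 = 1" and Re_x0: "Re (f x0) = M"
    using Re_functional_attains_Sup bdd M_def \<open>M > 0\<close> Re_le by blast
  then have "(cmod (f x0))\<^sup>2 \<le> M\<^sup>2"
    using cmod_le[of x0] by (simp add: power_mono)
  then have "Im (f x0) = 0"
    using Re_x0 cmod_power2[of "f x0"] by simp
  then have "f x0 = of_real M"
    using Re_x0 by (simp add: complex_eq_iff)
  with \<open>M > 0\<close> \<open>norm x0 = 1\<close> cmod_le show ?thesis
    by blast
qed

theorem riesz_representation:
  fixes f :: "'a::chilbert \<Rightarrow> complex"
  assumes add: "\<And>x y. f (x + y) = f x + f y" and sc: "\<And>c x. f (scaleC c x) = c * f x"
    and bnd: "\<And>x. cmod (f x) \<le> norm x * K"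
  shows "\<exists>z. \<forall>x. f x = cinner x z"
proof (cases "\<forall>x. f x = 0")
  case True
  then show ?thesis by (intro exI[of _ 0]) simp
next
  case False
  then obtain x0 M where "M > 0" "norm x0 = 1" and fx0: "f x0 = of_real M"
    and le: "\<And>w. cmod (f w) \<le> M * norm w"
    using bounded_functional_attains_norm[OF add sc bnd] by blast
  have "f y = cinner y (scaleC M x0)" for y
  proof -
    define y' where "y' = y - scaleC (f y / M) x0"
    have f_diff: "f (a - b) = f a - f b" for a b
      using add[of "a - b" b] by simp
    have "f y' = 0"
      using \<open>M > 0\<close> by (simp add: y'_def f_diff sc fx0)
    \<comment> \<open>\<open>|f|\<close> is maximal on the unit sphere at \<open>x0\<close>, so moving \<open>x0\<close> along the kernel
      of \<open>f\<close> cannot decrease its norm\<close>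
    have "norm x0 \<le> norm (x0 + scaleC t y')" for t
      using le[of "x0 + scaleC t y'"] \<open>M > 0\<close> \<open>norm x0 = 1\<close>
      by (simp add: add sc fx0 \<open>f y' = 0\<close>)
    then have "cinner y' x0 = 0"
      by (rule cinner_zero_if_norm_le_norm_add)
    then have "cinner y x0 = f y / M"
      using \<open>norm x0 = 1\<close> by (simp add: y'_def cinner_diff_left cinner_scaleC_left cinner_self_norm)
    then show ?thesis
      using \<open>M > 0\<close> by (simp add: cinner_scaleC_right)
  qed
  then show ?thesis by blast
qed

lemma bounded_clinear_additive: "bounded_clinear T \<Longrightarrow> T (x + y) = T x + T y"
  by (simp add: bounded_clinear_def)

lemma bounded_clinear_homogeneous: "bounded_clinear T \<Longrightarrow> T (scaleC c x) = scaleC c (T x)"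
  by (simp add: bounded_clinear_def)

lemma bounded_clinear_nonneg_bound:
  assumes "bounded_clinear (T::'a::chilbert \<Rightarrow> 'a)"
  obtains K where "K \<ge> 0" "\<And>x. norm (T x) \<le> norm x * K"
proof -
  obtain K where K: "\<And>x. norm (T x) \<le> norm x * K"
    using assms by (auto simp: bounded_clinear_def)
  have "norm (T x) \<le> norm x * \<bar>K\<bar>" for x
    using K[of x] mult_left_mono[of K "\<bar>K\<bar>" "norm x"] by force
  then show ?thesis
    using that[of "\<bar>K\<bar>"] by simp
qed

lemma bounded_clinear_lincomb:
  assumes "bounded_clinear B" "bounded_clinear (C::'a::chilbert \<Rightarrow> 'a)"
  shows "bounded_clinear (\<lambda>x. scaleC a (B x) + scaleC b (C x))"
proof -
  obtain K1 where K1: "K1 \<ge> 0" "\<And>x. norm (B x) \<le> norm x * K1"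
    using bounded_clinear_nonneg_bound[OF assms(1)] by blast
  obtain K2 where K2: "K2 \<ge> 0" "\<And>x. norm (C x) \<le> norm x * K2"
    using bounded_clinear_nonneg_bound[OF assms(2)] by blast
  have "norm (scaleC a (B x) + scaleC b (C x)) \<le> norm x * (cmod a * K1 + cmod b * K2)" for x
  proof -
    have "norm (scaleC a (B x) + scaleC b (C x)) \<le> cmod a * norm (B x) + cmod b * norm (C x)"
      using norm_triangle_ineq[of "scaleC a (B x)" "scaleC b (C x)"] by (simp add: norm_scaleC)
    also have "\<dots> \<le> cmod a * (norm x * K1) + cmod b * (norm x * K2)"
      using K1(2)[of x] K2(2)[of x] by (intro add_mono mult_left_mono) auto
    finally show ?thesis by (simp add: algebra_simps)
  qed
  moreover have "scaleC a (B (x + y)) + scaleC b (C (x + y)) =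
      scaleC a (B x) + scaleC b (C x) + (scaleC a (B y) + scaleC b (C y))" for x y
    by (simp add: bounded_clinear_additive[OF assms(1)] bounded_clinear_additive[OF assms(2)]
        cscale.scale_right_distrib)
  moreover have "scaleC a (B (scaleC c x)) + scaleC b (C (scaleC c x)) =
      scaleC c (scaleC a (B x) + scaleC b (C x))" for c x
    by (simp add: bounded_clinear_homogeneous[OF assms(1)] bounded_clinear_homogeneous[OF assms(2)]
        cscale.scale_right_distrib mult.commute)
  ultimately show ?thesis
    unfolding bounded_clinear_def by blast
qed

lemma bounded_clinear_adjoint_exists:
  assumes T: "bounded_clinear (T::'a::chilbert \<Rightarrow> 'a)"
  shows "\<exists>S. bounded_clinear S \<and> (\<forall>x y. cinner (T x) y = cinner x (S y))"
proof -
  obtain K where K: "K \<ge> 0" "\<And>x. norm (T x) \<le> norm x * K"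
    using bounded_clinear_nonneg_bound[OF T] by blast
  have "\<exists>z. \<forall>x. cinner (T x) y = cinner x z" for y
  proof (rule riesz_representation[where K="K * norm y"])
    show "cmod (cinner (T x) y) \<le> norm x * (K * norm y)" for x
      using cmod_cinner_le[of "T x" y] mult_right_mono[OF K(2)[of x] norm_ge_zero[of y]]
      by (simp add: mult.assoc)
  qed (simp_all add: bounded_clinear_additive[OF T] bounded_clinear_homogeneous[OF T]
      cinner_add_left cinner_scaleC_left)
  then obtain S where S: "\<And>x y. cinner (T x) y = cinner x (S y)"
    by metis
  have "S (y + y') = S y + S y'" for y y'
    by (rule cinner_eqI) (simp add: S[symmetric] cinner_add_right)
  moreover have "S (scaleC c y) = scaleC c (S y)" for c y
    by (rule cinner_eqI) (simp add: S[symmetric] cinner_scaleC_right)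
  moreover have "norm (S y) \<le> norm y * K" for y
  proof (cases "S y = 0")
    case True
    then show ?thesis using K by simp
  next
    case False
    have "(norm (S y))\<^sup>2 = cmod (cinner (T (S y)) y)"
      by (simp add: S cinner_self_norm del: of_real_power)
    also have "\<dots> \<le> norm (S y) * K * norm y"
      using cmod_cinner_le[of "T (S y)" y] mult_right_mono[OF K(2)[of "S y"] norm_ge_zero[of y]]
      by linarith
    finally show ?thesis
      using False by (simp add: power2_eq_square mult_ac)
  qed
  ultimately show ?thesis
    unfolding bounded_clinear_def using S by blast
qed

lemma adjoint_eqI:
  assumes "bounded_clinear S" "\<And>x y. cinner (T x) y = cinner x (S y)"
  shows "adjoint T = (S::'a::chilbert \<Rightarrow> 'a)"
  unfolding adjoint_def
proof (rule the_equality)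
  fix S' assume "bounded_clinear S' \<and> (\<forall>x y. cinner (T x) y = cinner x (S' y))"
  then show "S' = S"
    using assms(2) by (intro ext cinner_eqI) simp
qed (use assms in blast)

lemma selfadjoint_cinner:
  assumes "selfadjoint (B::'a::chilbert \<Rightarrow> 'a)"
  shows "cinner (B x) y = cinner x (B y)"
proof -
  obtain S where S: "bounded_clinear S" "\<And>x y. cinner (B x) y = cinner x (S y)"
    using assms bounded_clinear_adjoint_exists unfolding selfadjoint_def by blast
  then have "B = S"
    using adjoint_eqI[OF S] assms by (simp add: selfadjoint_def)
  with S show ?thesis by simp
qed

lemma ReOp_selfadjoint_lincomb:
  assumes B: "selfadjoint (B::'a::chilbert \<Rightarrow> 'a)" and C: "selfadjoint C"
  shows "ReOp (\<lambda>x. scaleC c1 (B x) + scaleC c2 (C x))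
       = (\<lambda>x. scaleC (of_real (Re c1)) (B x) + scaleC (of_real (Re c2)) (C x))"
proof -
  have bB: "bounded_clinear B" and bC: "bounded_clinear C"
    using B C by (auto simp: selfadjoint_def)
  have "adjoint (\<lambda>x. scaleC c1 (B x) + scaleC c2 (C x))
      = (\<lambda>x. scaleC (cnj c1) (B x) + scaleC (cnj c2) (C x))"
    by (rule adjoint_eqI)
      (simp_all add: bounded_clinear_lincomb bB bC cinner_add_left cinner_add_right
        cinner_scaleC_left cinner_scaleC_right selfadjoint_cinner[OF B] selfadjoint_cinner[OF C])
  moreover have "complex_of_real (Re z) = 1/2 * z + 1/2 * cnj z" for z
    using complex_add_cnj[of z] by (simp add: field_simps)
  ultimately show ?thesis
    unfolding ReOp_def
    by (simp only: cscale.scale_right_distrib cscale.scale_left_distrib cscale.scale_scale add_ac)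
qed

lemma is_op_norm_lincomb_le:
  assumes N: "is_op_norm N" and P: "bounded_clinear P" and Q: "bounded_clinear (Q::'a::chilbert \<Rightarrow> 'a)"
  shows "N (\<lambda>x. scaleC a (P x) + scaleC b (Q x)) \<le> cmod a * N P + cmod b * N Q"
proof -
  have triangle: "\<And>S T. bounded_clinear S \<Longrightarrow> bounded_clinear T \<Longrightarrow> N (\<lambda>x. S x + T x) \<le> N S + N T"
    and homogeneous: "\<And>c T. bounded_clinear T \<Longrightarrow> N (\<lambda>x. scaleC c (T x)) = cmod c * N T"
    using N unfolding is_op_norm_def by blast+
  have "bounded_clinear (\<lambda>x. scaleC c (T x))" if "bounded_clinear T" for c and T :: "'a \<Rightarrow> 'a"
    using bounded_clinear_lincomb[OF that that, of c 0] by simp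
  then have "N (\<lambda>x. scaleC a (P x) + scaleC b (Q x))
      \<le> N (\<lambda>x. scaleC a (P x)) + N (\<lambda>x. scaleC b (Q x))"
    using P Q by (intro triangle)
  also have "\<dots> = cmod a * N P + cmod b * N Q"
    using P Q by (simp add: homogeneous)
  finally show ?thesis .
qed

lemma scaleC_of_real_sum_diff:
  assumes "p = a + b" "q = a - b"
  shows "scaleC (complex_of_real p) x + scaleC (complex_of_real q) y
     = scaleC (complex_of_real a) (x + y) + scaleC (complex_of_real b) (x - (y::'a::chilbert))"
  unfolding assms
  by (simp add: cscale.scale_left_distrib cscale.scale_left_diff_distrib
      cscale.scale_right_distrib cscale.scale_right_diff_distrib)

text \<open>\<open>\<Re>(e\<^sup>i\<^sup>\<theta>(l1 B + l2 C)) = p B + q C = a (B + C) + b (B - C)\<close> for self-adjoint \<open>B, C\<close>,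
  where \<open>(a, b) = rotated_sum_diff (l1, l2, \<theta>)\<close>.\<close>

definition rotated_sum_diff :: "complex \<times> complex \<times> real \<Rightarrow> real \<times> real" where
  "rotated_sum_diff = (\<lambda>(l1, l2, \<theta>).
    let p = Re (exp (\<i> * complex_of_real \<theta>) * l1); q = Re (exp (\<i> * complex_of_real \<theta>) * l2)
    in ((p + q) / 2, (p - q) / 2))"

lemma rotated_sum_diff_image:
  "rotated_sum_diff ` {(l1, l2, \<theta>). (cmod l1)\<^sup>2 + (cmod l2)\<^sup>2 \<le> 1 \<and> \<theta> \<in> (UNIV :: real set)}
     = {(a, b). a\<^sup>2 + b\<^sup>2 \<le> 1/2}"
proof (intro equalityI subsetI)
  fix ab assume "ab \<in> rotated_sum_diff ` {(l1, l2, \<theta>). (cmod l1)\<^sup>2 + (cmod l2)\<^sup>2 \<le> 1 \<and> \<theta> \<in> UNIV}"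
  then obtain l1 l2 \<theta> where ab: "ab = rotated_sum_diff (l1, l2, \<theta>)"
    and l: "(cmod l1)\<^sup>2 + (cmod l2)\<^sup>2 \<le> 1"
    by auto
  define p where "p = Re (exp (\<i> * complex_of_real \<theta>) * l1)"
  define q where "q = Re (exp (\<i> * complex_of_real \<theta>) * l2)"
  have Re_sq: "(Re (exp (\<i> * complex_of_real \<theta>) * l))\<^sup>2 \<le> (cmod l)\<^sup>2" for l
  proof -
    have "(Re z)\<^sup>2 \<le> (cmod z)\<^sup>2" for z
      using abs_le_square_iff[of "Re z" "cmod z"] abs_Re_le_cmod[of z] by simp
    then show ?thesis
      by (metis mult_1 norm_exp_i_times norm_mult)
  qed
  have "((p + q) / 2)\<^sup>2 + ((p - q) / 2)\<^sup>2 = (p\<^sup>2 + q\<^sup>2) / 2"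
    by (simp add: power2_eq_square field_simps)
  also have "\<dots> \<le> 1 / 2"
    using Re_sq[of l1] Re_sq[of l2] l unfolding p_def q_def by simp
  finally show "ab \<in> {(a, b). a\<^sup>2 + b\<^sup>2 \<le> 1/2}"
    unfolding ab rotated_sum_diff_def
    by (simp only: Let_def case_prod_conv p_def[symmetric] q_def[symmetric]) simp
next
  fix ab :: "real \<times> real" assume "ab \<in> {(a, b). a\<^sup>2 + b\<^sup>2 \<le> 1 / 2}"
  then obtain a b where ab: "ab = (a, b)" and "a\<^sup>2 + b\<^sup>2 \<le> 1/2" by auto
  then have "(cmod (complex_of_real (a + b)))\<^sup>2 + (cmod (complex_of_real (a - b)))\<^sup>2 \<le> 1"
    unfolding norm_of_real power2_abs by (simp add: power2_eq_square algebra_simps)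
  moreover have "ab = rotated_sum_diff (of_real (a + b), of_real (a - b), 0)"
    by (simp add: ab rotated_sum_diff_def)
  ultimately show "ab \<in> rotated_sum_diff ` {(l1, l2, \<theta>). (cmod l1)\<^sup>2 + (cmod l2)\<^sup>2 \<le> 1 \<and> \<theta> \<in> UNIV}"
    by blast
qed

lemma w_Ne_selfadjoint:
  assumes "selfadjoint (B::'a::chilbert \<Rightarrow> 'a)" "selfadjoint C"
  shows "w_Ne N B C = (SUP (a, b) \<in> {(a, b). a\<^sup>2 + b\<^sup>2 \<le> 1/2}.
           N (\<lambda>x. scaleC (of_real a) (B x + C x) + scaleC (of_real b) (B x - C x)))"
proof -
  define H where "H = (\<lambda>(a, b). N (\<lambda>x. scaleC (of_real a) (B x + C x) + scaleC (of_real b) (B x - C x)))"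
  have "(\<lambda>(l1, l2, \<theta>). N (ReOp (\<lambda>x. scaleC (exp (\<i> * complex_of_real \<theta>))
      (scaleC l1 (B x) + scaleC l2 (C x))))) = H \<circ> rotated_sum_diff"
  proof (intro ext, clarify)
    fix l1 l2 :: complex and \<theta> :: real
    define e where "e = exp (\<i> * complex_of_real \<theta>)"
    define p where "p = Re (e * l1)"
    define q where "q = Re (e * l2)"
    have "(\<lambda>x. scaleC e (scaleC l1 (B x) + scaleC l2 (C x)))
        = (\<lambda>x. scaleC (e * l1) (B x) + scaleC (e * l2) (C x))"
      by (simp add: cscale.scale_right_distrib)
    then have "ReOp (\<lambda>x. scaleC e (scaleC l1 (B x) + scaleC l2 (C x)))
        = (\<lambda>x. scaleC (of_real p) (B x) + scaleC (of_real q) (C x))"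
      by (simp only: ReOp_selfadjoint_lincomb[OF assms] p_def q_def)
    also have "\<dots> = (\<lambda>x. scaleC (of_real ((p + q) / 2)) (B x + C x)
        + scaleC (of_real ((p - q) / 2)) (B x - C x))"
      by (intro ext scaleC_of_real_sum_diff) (simp_all add: field_simps)
    finally show "N (ReOp (\<lambda>x. scaleC e (scaleC l1 (B x) + scaleC l2 (C x))))
        = (H \<circ> rotated_sum_diff) (l1, l2, \<theta>)"
      unfolding H_def rotated_sum_diff_def comp_def
      by (simp only: Let_def case_prod_conv e_def[symmetric] p_def[symmetric] q_def[symmetric])
  qed
  then show ?thesis
    unfolding w_Ne_def H_def[symmetric] by (metis image_comp rotated_sum_diff_image)
qed

lemma mult_add_mult_le_sqrt_sum_squares:
  fixes a b c d :: real
  shows "a * c + b * d \<le> sqrt (a\<^sup>2 + b\<^sup>2) * sqrt (c\<^sup>2 + d\<^sup>2)"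
  by (rule power2_le_imp_le)
    (simp_all add: power2_sum power_mult_distrib ring_distribs L2_set_mult_ineq_lemma add.commute)

lemma is_op_norm_lincomb_le_sqrt_half:
  assumes "is_op_norm N" "bounded_clinear P" "bounded_clinear (Q::'a::chilbert \<Rightarrow> 'a)"
    and "a\<^sup>2 + b\<^sup>2 \<le> 1/2"
  shows "N (\<lambda>x. scaleC (of_real a) (P x) + scaleC (of_real b) (Q x))
       \<le> 1 / sqrt 2 * sqrt ((N P)\<^sup>2 + (N Q)\<^sup>2)"
proof -
  have "N (\<lambda>x. scaleC (of_real a) (P x) + scaleC (of_real b) (Q x)) \<le> \<bar>a\<bar> * N P + \<bar>b\<bar> * N Q"
    using is_op_norm_lincomb_le[OF assms(1-3), of "of_real a" "of_real b"] by simp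
  also have "\<dots> \<le> sqrt (a\<^sup>2 + b\<^sup>2) * sqrt ((N P)\<^sup>2 + (N Q)\<^sup>2)"
    using mult_add_mult_le_sqrt_sum_squares[of "\<bar>a\<bar>" "N P" "\<bar>b\<bar>" "N Q"] by simp
  also have "\<dots> \<le> 1 / sqrt 2 * sqrt ((N P)\<^sup>2 + (N Q)\<^sup>2)"
    using real_sqrt_le_mono[OF assms(4)] by (intro mult_right_mono) (simp_all add: real_sqrt_divide)
  finally show ?thesis .
qed

theorem corollary2p8:
  fixes N :: "('a::chilbert \<Rightarrow> 'a) \<Rightarrow> real" and B C :: "'a \<Rightarrow> 'a"
  assumes "is_op_norm N"
    and "selfadjoint B" and "selfadjoint C"
  shows "(1 / sqrt 2) * max (N (\<lambda>x. B x + C x)) (N (\<lambda>x. B x - C x)) \<le> w_Ne N B C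
       \<and> w_Ne N B C \<le> (1 / sqrt 2) * sqrt ((N (\<lambda>x. B x + C x))\<^sup>2 + (N (\<lambda>x. B x - C x))\<^sup>2)"
proof -
  define P where "P = (\<lambda>x. B x + C x)"
  define Q where "Q = (\<lambda>x. B x - C x)"
  define H where "H = (\<lambda>(a, b). N (\<lambda>x. scaleC (complex_of_real a) (P x) + scaleC (complex_of_real b) (Q x)))"
  have P: "bounded_clinear P" and Q: "bounded_clinear Q"
    using assms(2,3) bounded_clinear_lincomb[of B C 1 1] bounded_clinear_lincomb[of B C 1 "-1"]
    by (simp_all add: P_def Q_def selfadjoint_def)
  have w: "w_Ne N B C = (SUP ab \<in> {(a, b). a\<^sup>2 + b\<^sup>2 \<le> 1/2}. H ab)"
    unfolding w_Ne_selfadjoint[OF assms(2,3)] H_def P_def Q_def ..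
  have H_le: "H ab \<le> 1 / sqrt 2 * sqrt ((N P)\<^sup>2 + (N Q)\<^sup>2)" if "ab \<in> {(a, b). a\<^sup>2 + b\<^sup>2 \<le> 1/2}" for ab
    using that is_op_norm_lincomb_le_sqrt_half[OF assms(1) P Q] by (auto simp: H_def)
  then have "H ab \<le> w_Ne N B C" if "ab \<in> {(a, b). a\<^sup>2 + b\<^sup>2 \<le> 1/2}" for ab
    unfolding w using that by (intro cSUP_upper bdd_aboveI2) auto
  from this[of "(1 / sqrt 2, 0)"] this[of "(0, 1 / sqrt 2)"]
  have "1 / sqrt 2 * max (N P) (N Q) \<le> w_Ne N B C"
    using assms(1) P Q by (simp add: H_def is_op_norm_def norm_divide power_divide max_def)
  moreover have "w_Ne N B C \<le> 1 / sqrt 2 * sqrt ((N P)\<^sup>2 + (N Q)\<^sup>2)"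
    unfolding w using H_le by (intro cSUP_least) (auto intro!: exI[of _ 0])
  ultimately show ?thesis
    unfolding P_def Q_def by blast
qed

end
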